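(* Let $q$ be a prime power, let $\alpha$ be a primitive element of $\mathbb{F}_{q^n}$, and let $\mathcal{F}$ be a flag on $\mathbb{F}_{q^n}$ whose best friend is the subfield $\mathbb{F}_{q^m}$. Let $\beta\in\mathbb{F}_{q^n}^*$ and write $\langle\beta\rangle=\langle\alpha^l\rangle$ with $l$ a divisor of $q^n-1$. If $\mathrm{Orb}_\beta(\mathcal{F})$ is an optimum distance flag code and $t$ is a dimension in the type vector of $\mathcal{F}$, then $m$ divides $t$ and $$\frac{\mathrm{lcm}\left(l,\frac{q^n-1}{q^m-1}\right)}{l}\le\begin{cases}\left\lfloor\frac{q^n-1}{q^t-1}\right\rfloor & \text{if } 2t\le n,\\[4pt] \left\lfloor\frac{q^n-1}{q^{n-t}-1}\right\rfloor & \text{if } 2t>n.\end{cases}$$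
   Context: A flag of type $(t_1,\ldots,t_r)$ on $\mathbb{F}_{q^n}$ is a sequence $(\mathcal{F}_1,\ldots,\mathcal{F}_r)$ of $\mathbb{F}_q$-subspaces with $\{0\}\subsetneq\mathcal{F}_1\subsetneq\cdots\subsetneq\mathcal{F}_r\subsetneq\mathbb{F}_{q^n}$ and $\dim_{\mathbb{F}_q}\mathcal{F}_i=t_i$. For $\beta\in\mathbb{F}_{q^n}^*$ of multiplicative order $|\beta|$, $\mathcal{U}\beta=\{u\beta:u\in\mathcal{U}\}$, $\mathcal{F}\beta=(\mathcal{F}_1\beta,\ldots,\mathcal{F}_r\beta)$ and $\mathrm{Orb}_\beta(\mathcal{F})=\{\mathcal{F}\beta^j:0\le j\le|\beta|-1\}$. A subfield $\mathbb{F}_{q^m}$ is a friend of $\mathcal{F}$ if every $\mathcal{F}_i$ is an $\mathbb{F}_{q^m}$-vector space; the best friend is the largest friend. Subspace distance $d_S(\mathcal{U},\mathcal{V})=\dim(\mathcal{U}+\mathcal{V})-\dim(\mathcal{U}\cap\mathcal{V})$; flag distance $d_f(\mathcal{F},\mathcal{F}')=\sum_i d_S(\mathcal{F}_i,\mathcal{F}'_i)$; the minimum distance of a set of flags is the minimum over distinct pairs ($0$ for a single flag). A set of flags of type $(t_1,\ldots,t_r)$ on $\mathbb{F}_{q^n}$ is an optimum distance flag code if its minimum distance equals $2\left(\sum_{t_i\le\lfloor n/2\rfloor}t_i+\sum_{t_i>\lfloor n/2\rfloor}(n-t_i)\right)$. *)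

theory Defs
  imports "HOL-Algebra.Embedded_Algebras" "HOL-Computational_Algebra.Primes"
begin

text \<open>Throughout, R is the finite field F_{q^n} (a HOL-Algebra ring record) and
  K is its subfield F_q.\<close>

definition fq_subspace :: "'a set \<Rightarrow> ('a, 'b) ring_scheme \<Rightarrow> 'a set \<Rightarrow> bool" where
  "fq_subspace K R U \<longleftrightarrow> subalgebra K U R"

definition sdim :: "'a set \<Rightarrow> ('a, 'b) ring_scheme \<Rightarrow> 'a set \<Rightarrow> nat" where
  "sdim K R U = ring.dim R K U"

definition is_flag :: "'a set \<Rightarrow> ('a, 'b) ring_scheme \<Rightarrow> 'a set list \<Rightarrow> bool" where
  "is_flag K R Fl \<longleftrightarrow>
     (\<forall>i < length Fl. fq_subspace K R (Fl ! i)) \<and>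
     (\<forall>i < length Fl. \<forall>j < length Fl. i < j \<longrightarrow> Fl ! i \<subset> Fl ! j) \<and>
     (\<forall>i < length Fl. {\<zero>\<^bsub>R\<^esub>} \<subset> Fl ! i \<and> Fl ! i \<subset> carrier R)"

definition flag_type :: "'a set \<Rightarrow> ('a, 'b) ring_scheme \<Rightarrow> 'a set list \<Rightarrow> nat list" where
  "flag_type K R Fl = map (sdim K R) Fl"

definition is_friend :: "'a set \<Rightarrow> ('a, 'b) ring_scheme \<Rightarrow> 'a set list \<Rightarrow> 'a set \<Rightarrow> bool" where
  "is_friend K R Fl L \<longleftrightarrow> subfield L R \<and> K \<subseteq> L \<and> (\<forall>U \<in> set Fl. subalgebra L U R)"

definition is_best_friend :: "'a set \<Rightarrow> ('a, 'b) ring_scheme \<Rightarrow> 'a set list \<Rightarrow> 'a set \<Rightarrow> bool" where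
  "is_best_friend K R Fl L \<longleftrightarrow> is_friend K R Fl L \<and>
     (\<forall>L'. is_friend K R Fl L' \<longrightarrow> card L' \<le> card L)"

definition subspace_dist :: "'a set \<Rightarrow> ('a, 'b) ring_scheme \<Rightarrow> 'a set \<Rightarrow> 'a set \<Rightarrow> nat" where
  "subspace_dist K R U V = sdim K R (U <+>\<^bsub>R\<^esub> V) - sdim K R (U \<inter> V)"

definition flag_dist :: "'a set \<Rightarrow> ('a, 'b) ring_scheme \<Rightarrow> 'a set list \<Rightarrow> 'a set list \<Rightarrow> nat" where
  "flag_dist K R F1 F2 = (\<Sum>i < length F1. subspace_dist K R (F1 ! i) (F2 ! i))"

definition min_dist :: "'a set \<Rightarrow> ('a, 'b) ring_scheme \<Rightarrow> 'a set list set \<Rightarrow> nat" where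
  "min_dist K R C = (if card C \<le> 1 then 0
      else Min {flag_dist K R F1 F2 | F1 F2. F1 \<in> C \<and> F2 \<in> C \<and> F1 \<noteq> F2})"

definition optimum_distance :: "'a set \<Rightarrow> ('a, 'b) ring_scheme \<Rightarrow> nat \<Rightarrow> nat list \<Rightarrow> 'a set list set \<Rightarrow> bool" where
  "optimum_distance K R n ts C \<longleftrightarrow>
     (\<forall>Fl \<in> C. is_flag K R Fl \<and> flag_type K R Fl = ts) \<and>
     min_dist K R C = 2 * ((\<Sum>i < length ts. if ts ! i \<le> n div 2 then ts ! i else 0)
                         + (\<Sum>i < length ts. if ts ! i > n div 2 then n - ts ! i else 0))"

definition mult_order :: "('a, 'b) ring_scheme \<Rightarrow> 'a \<Rightarrow> nat" where
  "mult_order R b = (LEAST k. 0 < k \<and> b [^]\<^bsub>R\<^esub> k = \<one>\<^bsub>R\<^esub>)"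

definition scale_flag :: "('a, 'b) ring_scheme \<Rightarrow> 'a set list \<Rightarrow> 'a \<Rightarrow> 'a set list" where
  "scale_flag R Fl b = map (\<lambda>U. (\<lambda>u. u \<otimes>\<^bsub>R\<^esub> b) ` U) Fl"

definition orbit_flag :: "('a, 'b) ring_scheme \<Rightarrow> 'a set list \<Rightarrow> 'a \<Rightarrow> 'a set list set" where
  "orbit_flag R Fl b = {scale_flag R Fl (b [^]\<^bsub>R\<^esub> j) | j. j < mult_order R b}"

definition primitive_element :: "('a, 'b) ring_scheme \<Rightarrow> 'a \<Rightarrow> bool" where
  "primitive_element R a \<longleftrightarrow> a \<in> carrier R - {\<zero>\<^bsub>R\<^esub>} \<and>
     (\<forall>x \<in> carrier R - {\<zero>\<^bsub>R\<^esub>}. \<exists>k::nat. x = a [^]\<^bsub>R\<^esub> k)"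

definition cyc :: "('a, 'b) ring_scheme \<Rightarrow> 'a \<Rightarrow> 'a set" where
  "cyc R b = {b [^]\<^bsub>R\<^esub> (k::nat) | k. True}"

end

theory Submission
  imports Defs "HOL-Algebra.Multiplicative_Group" "HOL-Analysis.Convex"
begin

text \<open>
  Let \<open>c = lcm(l, (q^n-1)/(q^m-1)) / l\<close>. If \<open>\<beta>^d\<close> lies in \<open>F_{q^m}\<close> then \<open>c\<close> divides \<open>d\<close>,
  and the best friend \<open>F_{q^m}\<close> is precisely the stabiliser of the flag, so the flags
  \<open>F\<beta>^j\<close>, \<open>0 \<le> j < c\<close>, are pairwise distinct members of the orbit. Optimum distance forces
  every two of them to be at maximal distance in every component: the \<open>t\<close>-dimensional
  subspaces \<open>U\<beta>^j\<close> pairwise meet in dimension \<open>max(0, 2t - n)\<close>. A second-moment count of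
  the nonzero vectors they cover then bounds \<open>c\<close>. Divisibility \<open>m | t\<close> is the tower law
  for \<open>F_q \<subseteq> F_{q^m}\<close>.
\<close>

section \<open>Counting by second moments\<close>

lemma card_family_second_moment:
  fixes A :: "nat \<Rightarrow> 'a set"
  assumes V: "finite V" and sub: "\<And>j. j < c \<Longrightarrow> A j \<subseteq> V"
    and card: "\<And>j. j < c \<Longrightarrow> card (A j) = a"
    and inter: "\<And>i j. i < c \<Longrightarrow> j < c \<Longrightarrow> i \<noteq> j \<Longrightarrow> card (A i \<inter> A j) \<le> b"
  shows "(real c * a)\<^sup>2 \<le> card V * (real c * a + real c * (real c - 1) * b)"
proof -
  define X where "X v = (\<Sum>j<c. of_bool (v \<in> A j) :: real)" for v
  have count: "(\<Sum>v\<in>V. of_bool (v \<in> B) :: real) = card B" if "B \<subseteq> V" for B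
    using V that by (simp add: Int_absorb1 Int_absorb2)
  have "(\<Sum>v\<in>V. X v) = (\<Sum>j<c. \<Sum>v\<in>V. of_bool (v \<in> A j) :: real)"
    unfolding X_def by (rule sum.swap)
  also have "\<dots> = real c * a"
    using count sub card by simp
  finally have first: "(\<Sum>v\<in>V. X v) = real c * a" .
  have "(\<Sum>v\<in>V. (X v)\<^sup>2) = (\<Sum>i<c. \<Sum>j<c. \<Sum>v\<in>V. of_bool (v \<in> A i \<inter> A j) :: real)"
    unfolding X_def power2_eq_square sum_product
    by (simp add: sum.swap [of _ V] of_bool_conj)
  also have "\<dots> = (\<Sum>i<c. \<Sum>j<c. real (card (A i \<inter> A j)))"
    using count sub by (intro sum.cong refl) (meson inf.coboundedI1 lessThan_iff)
  also have "\<dots> \<le> (\<Sum>i<c. \<Sum>j<c. b + (if i = j then real a - b else 0))"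
    using inter card by (intro sum_mono) auto
  also have "\<dots> = real c * a + real c * (real c - 1) * b"
    by (simp add: sum.distrib algebra_simps)
  finally have second: "(\<Sum>v\<in>V. (X v)\<^sup>2) \<le> real c * a + real c * (real c - 1) * b" .
  have "(real c * a)\<^sup>2 \<le> (\<Sum>v\<in>V. (X v)\<^sup>2) * card V"
    using sum_squared_le_sum_of_squares [of X V] first by simp
  with second show ?thesis
    by (smt (verit) mult.commute mult_right_mono of_nat_0_le_iff)
qed

lemma le_div_of_second_moment_disjoint:
  fixes c a N :: nat
  assumes a: "0 < a" and moment: "(real c * a)\<^sup>2 \<le> N * (real c * a)"
  shows "c \<le> N div a"
proof -
  have "real c * a \<le> N"
  proof (cases "c = 0")
    case False
    with a have "0 < real c * a" by simp
    with moment show ?thesis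
      by (metis mult_le_cancel_right_pos power2_eq_square)
  qed simp
  then have "c * a \<le> N"
    by (simp flip: of_nat_mult)
  with a show ?thesis
    by (simp add: less_eq_div_iff_mult_less_eq)
qed

lemma le_div_of_second_moment_spread:
  fixes c x y :: nat
  assumes x: "1 \<le> x" and y: "2 \<le> y"
    and moment: "(real c * (x * y - 1))\<^sup>2
      \<le> real (x * y * y - 1) * (real c * (x * y - 1) + real c * (real c - 1) * (x - 1))"
  shows "c \<le> (x * y * y - 1) div (y - 1)"
proof (cases "c = 0")
  case False
  define X Y C where "X = real x" "Y = real y" "C = real c"
  have casts: "real (x * y - 1) = X * Y - 1" "real (x * y * y - 1) = X * Y * Y - 1"
    "real (x - 1) = X - 1" "real (y - 1) = Y - 1"
    using x y by (simp_all add: X_Y_C_def of_nat_diff one_le_mult_iff)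
  have "0 < C" "1 \<le> X" "2 \<le> Y"
    using False x y by (simp_all add: X_Y_C_def)
  from moment have "C * (C * (X * Y - 1)\<^sup>2) \<le> C * ((X * Y * Y - 1) * ((X * Y - 1) + (C - 1) * (X - 1)))"
    unfolding casts X_Y_C_def [symmetric] by (simp add: power2_eq_square algebra_simps)
  with \<open>0 < C\<close> have "C * (X * Y - 1)\<^sup>2 \<le> (X * Y * Y - 1) * ((X * Y - 1) + (C - 1) * (X - 1))"
    by simp
  \<comment> \<open>the slack of the second-moment inequality factors, and its last factor is the bound\<close>
  moreover have "(X * Y * Y - 1) * ((X * Y - 1) + (C - 1) * (X - 1)) - C * (X * Y - 1)\<^sup>2
      = X * (Y - 1) * ((X * Y * Y - 1) - C * (Y - 1))"
    by (simp add: power2_eq_square algebra_simps)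
  moreover have "0 < X * (Y - 1)"
    using \<open>1 \<le> X\<close> \<open>2 \<le> Y\<close> by simp
  ultimately have "C * (Y - 1) \<le> X * Y * Y - 1"
    by (smt (verit) mult_pos_neg)
  moreover have "real (c * (y - 1)) = C * (Y - 1)"
    by (simp only: of_nat_mult casts(4) X_Y_C_def(3))
  ultimately have "real (c * (y - 1)) \<le> real (x * y * y - 1)"
    using casts(2) by linarith
  then have "c * (y - 1) \<le> x * y * y - 1"
    by (simp only: of_nat_le_iff)
  with y show ?thesis
    by (simp add: less_eq_div_iff_mult_less_eq)
qed simp

lemma card_family_through_point_second_moment:
  fixes W :: "nat \<Rightarrow> 'a set"
  assumes X: "finite X" "z \<in> X"
    and W: "\<And>j. j < c \<Longrightarrow> z \<in> W j \<and> W j \<subseteq> X \<and> card (W j) = a"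
    and inter: "\<And>j k. j < c \<Longrightarrow> k < c \<Longrightarrow> j \<noteq> k \<Longrightarrow> card (W j \<inter> W k) \<le> b"
  shows "(real c * real (a - 1))\<^sup>2
    \<le> real (card X - 1) * (real c * real (a - 1) + real c * (real c - 1) * real (b - 1))"
proof -
  define A where "A j = W j - {z}" for j
  have finite_W: "finite (W j)" if "j < c" for j
    using W [OF that] X(1) finite_subset by blast
  have "A j \<subseteq> X - {z}" "card (A j) = a - 1" if "j < c" for j
    using W [OF that] finite_W [OF that] by (auto simp: A_def)
  moreover have "card (A j \<inter> A k) \<le> b - 1" if "j < c" "k < c" "j \<noteq> k" for j k
  proof -
    have "A j \<inter> A k = (W j \<inter> W k) - {z}"
      by (auto simp: A_def)
    with W that finite_W show ?thesis
      using inter [OF that] by simp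
  qed
  ultimately show ?thesis
    using card_family_second_moment [of "X - {z}" c A "a - 1" "b - 1"] X by simp
qed

lemma card_family_through_point_le:
  fixes W :: "nat \<Rightarrow> 'a set" and q n t :: nat
  assumes X: "finite X" "card X = q ^ n" "z \<in> X" and q: "1 < q" and t: "0 < t" "t < n"
    and W: "\<And>j. j < c \<Longrightarrow> z \<in> W j \<and> W j \<subseteq> X \<and> card (W j) = q ^ t"
    and inter: "\<And>j k. j < c \<Longrightarrow> k < c \<Longrightarrow> j \<noteq> k \<Longrightarrow> card (W j \<inter> W k) \<le> q ^ (2 * t - n)"
  shows "c \<le> (if 2 * t \<le> n then (q ^ n - 1) div (q ^ t - 1) else (q ^ n - 1) div (q ^ (n - t) - 1))"
proof -
  have moment: "(real c * (q ^ t - 1))\<^sup>2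
      \<le> real (q ^ n - 1) * (real c * (q ^ t - 1) + real c * (real c - 1) * (q ^ (2 * t - n) - 1))"
    using card_family_through_point_second_moment [of X z c W "q ^ t" "q ^ (2 * t - n)"] X W inter
    by simp
  show ?thesis
  proof (cases "2 * t \<le> n")
    case True
    have "0 < q ^ t - 1"
      using one_less_power [OF q t(1)] by simp
    with True show ?thesis
      using moment le_div_of_second_moment_disjoint by simp
  next
    case False
    define x y where "x = q ^ (2 * t - n)" "y = q ^ (n - t)"
    have xy: "x * y = q ^ t" and ty: "q ^ t * y = q ^ n"
      using False t by (simp_all add: x_y_def flip: power_add)
    have "c \<le> (x * y * y - 1) div (y - 1)"
    proof (rule le_div_of_second_moment_spread)
      show "1 \<le> x" "2 \<le> y"
        using q one_less_power [OF q, of "n - t"] t by (simp_all add: x_y_def)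
      show "(real c * (x * y - 1))\<^sup>2
          \<le> real (x * y * y - 1) * (real c * (x * y - 1) + real c * (real c - 1) * (x - 1))"
        using moment unfolding xy ty by (simp only: x_y_def(1))
    qed
    with False show ?thesis
      unfolding xy ty by (simp add: x_y_def(2))
  qed
qed

section \<open>Dimension over a subfield\<close>

context ring
begin

lemma card_eq_card_pow_dimension:
  assumes K: "subfield K R" "finite K" and E: "dimension d K E"
  shows "card E = card K ^ d"
proof -
  obtain Us where Us: "set Us \<subseteq> carrier R" "independent K Us" "length Us = d" "Span K Us = E"
    using exists_base [OF K(1) E] by blast
  let ?coeffs = "{Ks. set Ks \<subseteq> K \<and> length Ks = d}"
  have E_eq: "E = (\<lambda>Ks. combine Ks Us) ` ?coeffs"
    using Span_eq_combine_set_length_version [OF K(1) Us(1)] Us(3,4) by auto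
  have "inj_on (\<lambda>Ks. combine Ks Us) ?coeffs"
  proof (rule inj_onI)
    fix Ks Ks' assume Ks: "Ks \<in> ?coeffs" "Ks' \<in> ?coeffs" and eq: "combine Ks Us = combine Ks' Us"
    have "combine Ks Us \<in> Span K Us"
      using E_eq Us(4) Ks(1) by blast
    from unique_decomposition [OF K(1) Us(2) this] show "Ks = Ks'"
      using Ks eq Us(3) by (metis (mono_tags, lifting) mem_Collect_eq)
  qed
  then have "card E = card ?coeffs"
    by (simp add: E_eq card_image)
  also have "\<dots> = card K ^ d"
    using card_lists_length_eq [OF K(2)] by simp
  finally show ?thesis .
qed

lemma finite_dimension_carrier:
  assumes "subfield K R" and "finite (carrier R)"
  shows "finite_dimension K (carrier R)"
proof -
  obtain Us where Us: "set Us = carrier R"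
    using finite_list [OF assms(2)] by blast
  then have "Span K Us = carrier R"
    using Span_base_incl [OF assms(1), of Us] Span_in_carrier [OF subfieldE(3) [OF assms(1)], of Us]
    by (metis order_refl subset_antisym)
  with Us show ?thesis
    using Span_finite_dimension [OF assms(1)] by fastforce
qed

lemma finite_dimension_subalgebra:
  assumes "subfield K R" and "finite (carrier R)" and "subalgebra K V R"
  shows "finite_dimension K V"
  using subalbegra_incl_imp_finite_dimension [OF assms(1) finite_dimension_carrier [OF assms(1,2)]]
    assms(3) subalgebra_in_carrier by blast

lemma card_subalgebra:
  assumes K: "subfield K R" and fin: "finite (carrier R)" and V: "subalgebra K V R"
  shows "card V = card K ^ dim K V"
proof -
  have "dimension (dim K V) K V"
    using finite_dimensionE [OF K finite_dimension_subalgebra [OF K fin V]] by (simp add: over_def)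
  then show ?thesis
    using card_eq_card_pow_dimension K fin finite_subset subfieldE(3) by blast
qed

lemma subfield_subalgebra:
  assumes "subfield L R" and "K \<subseteq> L"
  shows "subalgebra K L R"
proof (intro subalgebra.intro subalgebra_axioms.intro)
  note L = subfieldE(1) [OF assms(1)]
  show "subgroup L (add_monoid R)"
    using subring.axioms(1) [OF L] .
  show "k \<otimes> v \<in> L" if "k \<in> K" "v \<in> L" for k v
    using subringE(6) [OF L] assms(2) that by blast
qed

lemma dim_subfield_dvd_dim:
  assumes fin: "finite (carrier R)" and K: "subfield K R" and L: "subfield L R" "K \<subseteq> L"
    and V: "subalgebra L V R"
  shows "dim K L dvd dim K V"
proof -
  have "(dim over K) V = (dim over K) L * (dim over L) V"
    using telescopic_base_dim(2) [OF K L(1) finite_dimension_subalgebra [OF K fin subfield_subalgebra [OF L]]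
        finite_dimension_subalgebra [OF L(1) fin V]] .
  then show ?thesis
    by (simp add: over_def)
qed

end

context field
begin

lemma one_lt_card_subfield:
  assumes "finite (carrier R)" and "subfield K R"
  shows "1 < card K"
proof -
  have "{\<zero>, \<one>} \<subseteq> K"
    using subringE(2,3) [OF subfieldE(1) [OF assms(2)]] by blast
  then have "card {\<zero>, \<one>} \<le> card K"
    using assms finite_subset subfieldE(3) card_mono by metis
  then show ?thesis
    by simp
qed

lemma dim_subalgebra_mono:
  assumes fin: "finite (carrier R)" and K: "subfield K R"
    and V: "subalgebra K V R" and W: "subalgebra K W R" and "V \<subseteq> W"
  shows "dim K V \<le> dim K W"
proof -
  have "card V \<le> card W"
    using card_mono [OF finite_subset [OF subalgebra_in_carrier [OF W] fin] \<open>V \<subseteq> W\<close>] .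
  then have "card K ^ dim K V \<le> card K ^ dim K W"
    by (simp add: card_subalgebra [OF K fin V] card_subalgebra [OF K fin W])
  then show ?thesis
    using power_le_imp_le_exp one_lt_card_subfield [OF fin K] by blast
qed

lemma dim_carrier:
  assumes fin: "finite (carrier R)" and K: "subfield K R"
    and q: "card K = q" and n: "card (carrier R) = q ^ n"
  shows "dim K (carrier R) = n"
proof -
  have "q ^ dim K (carrier R) = q ^ n"
    using card_subalgebra [OF K fin carrier_is_subalgebra [OF subfieldE(3) [OF K]]] q n by simp
  then show ?thesis
    using one_lt_card_subfield [OF fin K] q by (simp add: power_inject_exp)
qed

end

section \<open>The stabiliser of a flag\<close>

definition flag_stabilizer :: "('a, 'b) ring_scheme \<Rightarrow> 'a set list \<Rightarrow> 'a set" where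
  "flag_stabilizer R Fl = {y \<in> carrier R. \<forall>U \<in> set Fl. \<forall>u \<in> U. u \<otimes>\<^bsub>R\<^esub> y \<in> U}"

lemma flag_stabilizerI:
  assumes "h \<in> carrier R" and "\<And>U u. U \<in> set Fl \<Longrightarrow> u \<in> U \<Longrightarrow> u \<otimes>\<^bsub>R\<^esub> h \<in> U"
  shows "h \<in> flag_stabilizer R Fl"
  using assms unfolding flag_stabilizer_def by blast

lemma flag_stabilizerD:
  assumes "h \<in> flag_stabilizer R Fl" and "U \<in> set Fl" and "u \<in> U"
  shows "u \<otimes>\<^bsub>R\<^esub> h \<in> U"
  using assms unfolding flag_stabilizer_def by blast

lemma flag_stabilizer_subset_carrier: "flag_stabilizer R Fl \<subseteq> carrier R"
  unfolding flag_stabilizer_def by blast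

lemma flag_subalgebra:
  assumes "is_flag K R Fl" and "U \<in> set Fl"
  shows "subalgebra K U R"
  using assms unfolding is_flag_def fq_subspace_def by (metis in_set_conv_nth)

context field
begin

lemma flag_elem_in_carrier:
  assumes "is_flag K R Fl" and "U \<in> set Fl" and "u \<in> U"
  shows "u \<in> carrier R"
  using subalgebra_in_carrier [OF flag_subalgebra [OF assms(1,2)]] assms(3) by blast

lemma subset_flag_stabilizer:
  assumes "L \<subseteq> carrier R" and "\<And>U. U \<in> set Fl \<Longrightarrow> subalgebra L U R"
  shows "L \<subseteq> flag_stabilizer R Fl"
proof
  fix y assume y: "y \<in> L"
  show "y \<in> flag_stabilizer R Fl"
  proof (rule flag_stabilizerI)
    show "y \<in> carrier R"
      using assms(1) y by blast
    fix U u assume "U \<in> set Fl" "u \<in> U"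
    then have "y \<otimes> u \<in> U" and "u \<in> carrier R"
      using subalgebra.smult_closed [OF assms(2)] subalgebra_in_carrier [OF assms(2)] y by blast+
    then show "u \<otimes> y \<in> U"
      using m_comm assms(1) y by (metis subsetD)
  qed
qed

lemma subring_flag_stabilizer:
  assumes flag: "is_flag K R Fl"
  shows "subring (flag_stabilizer R Fl) R"
proof -
  let ?S = "flag_stabilizer R Fl"
  note S_carrier = flag_stabilizer_subset_carrier [of R Fl]
    and U_carrier = flag_elem_in_carrier [OF flag]
  have U_add: "additive_subgroup U R" if "U \<in> set Fl" for U
    using additive_subgroup.intro [OF subalgebra.axioms(1) [OF flag_subalgebra [OF flag that]]] .
  show ?thesis
  proof (rule subringI [OF S_carrier])
    show "\<one> \<in> ?S"
      by (rule flag_stabilizerI) (simp_all add: U_carrier)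
    show "\<ominus> h \<in> ?S" if h: "h \<in> ?S" for h
    proof (rule flag_stabilizerI)
      show "u \<otimes> \<ominus> h \<in> U" if "U \<in> set Fl" "u \<in> U" for U u
        using flag_stabilizerD [OF h that] additive_subgroup.a_inv_closed [OF U_add [OF that(1)]]
          r_minus [OF U_carrier [OF that] subsetD [OF S_carrier h]] by simp
    qed (use h S_carrier in blast)
    show "h1 \<otimes> h2 \<in> ?S" if h: "h1 \<in> ?S" "h2 \<in> ?S" for h1 h2
    proof (rule flag_stabilizerI)
      show "u \<otimes> (h1 \<otimes> h2) \<in> U" if "U \<in> set Fl" "u \<in> U" for U u
        using flag_stabilizerD [OF h(2) that(1) flag_stabilizerD [OF h(1) that]]
          m_assoc [OF U_carrier [OF that] subsetD [OF S_carrier h(1)] subsetD [OF S_carrier h(2)]]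
        by simp
    qed (use h S_carrier in blast)
    show "h1 \<oplus> h2 \<in> ?S" if h: "h1 \<in> ?S" "h2 \<in> ?S" for h1 h2
    proof (rule flag_stabilizerI)
      show "u \<otimes> (h1 \<oplus> h2) \<in> U" if "U \<in> set Fl" "u \<in> U" for U u
        using flag_stabilizerD [OF h(1) that] flag_stabilizerD [OF h(2) that]
          additive_subgroup.a_closed [OF U_add [OF that(1)]]
          r_distr [OF subsetD [OF S_carrier h(1)] subsetD [OF S_carrier h(2)] U_carrier [OF that]]
        by simp
    qed (use h S_carrier in blast)
  qed
qed

lemma subfield_flag_stabilizer:
  assumes fin: "finite (carrier R)" and flag: "is_flag K R Fl"
  shows "subfield (flag_stabilizer R Fl) R"
proof (rule subfieldI' [OF subring_flag_stabilizer [OF flag]])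
  fix k assume "k \<in> flag_stabilizer R Fl - {\<zero>}"
  then have k: "k \<in> flag_stabilizer R Fl" "k \<in> carrier R" "k \<noteq> \<zero>" and k_unit: "k \<in> Units R"
    using flag_stabilizer_subset_carrier [of R Fl] field_Units by auto
  show "inv k \<in> flag_stabilizer R Fl"
  proof (rule flag_stabilizerI)
    fix U u assume U: "U \<in> set Fl" "u \<in> U"
    have U_sub: "U \<subseteq> carrier R"
      using flag_elem_in_carrier [OF flag U(1)] by blast
    \<comment> \<open>right multiplication by \<open>k\<close> maps the finite set \<open>U\<close> injectively into itself, hence onto it\<close>
    have inj: "inj_on (\<lambda>w. w \<otimes> k) U"
      using m_rcancel [OF k(3,2)] U_sub by (intro inj_onI) blast
    have maps: "(\<lambda>w. w \<otimes> k) ` U \<subseteq> U"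
      using flag_stabilizerD [OF k(1) U(1)] by blast
    have "(\<lambda>w. w \<otimes> k) ` U = U"
      using card_subset_eq [OF finite_subset [OF U_sub fin] maps] card_image [OF inj] by simp
    then obtain w where w: "w \<in> U" "u = w \<otimes> k"
      using U(2) by blast
    have "w \<otimes> k \<otimes> inv k = w"
      using m_assoc [OF subsetD [OF U_sub w(1)] k(2) Units_inv_closed [OF k_unit]]
        Units_r_inv [OF k_unit] subsetD [OF U_sub w(1)] by simp
    with w show "u \<otimes> inv k \<in> U"
      by simp
  qed (rule Units_inv_closed [OF k_unit])
qed

lemma subalgebra_flag_stabilizer:
  assumes flag: "is_flag K R Fl" and U: "U \<in> set Fl"
  shows "subalgebra (flag_stabilizer R Fl) U R"
proof (intro subalgebra.intro subalgebra_axioms.intro)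
  show "subgroup U (add_monoid R)"
    using subalgebra.axioms(1) [OF flag_subalgebra [OF flag U]] .
  show "k \<otimes> v \<in> U" if "k \<in> flag_stabilizer R Fl" "v \<in> U" for k v
    using flag_stabilizerD [OF that(1) U that(2)] m_comm flag_elem_in_carrier [OF flag U that(2)]
      subsetD [OF flag_stabilizer_subset_carrier that(1)] by simp
qed

lemma best_friend_eq_flag_stabilizer:
  assumes fin: "finite (carrier R)" and K: "subfield K R" and flag: "is_flag K R Fl"
    and best: "is_best_friend K R Fl L"
  shows "L = flag_stabilizer R Fl"
proof -
  let ?S = "flag_stabilizer R Fl"
  have L: "subfield L R" "\<And>U. U \<in> set Fl \<Longrightarrow> subalgebra L U R"
    using best unfolding is_best_friend_def is_friend_def by auto
  have "is_friend K R Fl ?S"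
    unfolding is_friend_def
    using subfield_flag_stabilizer [OF fin flag] subalgebra_flag_stabilizer [OF flag]
      subset_flag_stabilizer [OF subfieldE(3) [OF K] flag_subalgebra [OF flag]] by blast
  then have "card ?S \<le> card L"
    using best unfolding is_best_friend_def by blast
  moreover have "L \<subseteq> ?S"
    using subset_flag_stabilizer [OF subfieldE(3) [OF L(1)] L(2)] .
  moreover have "finite ?S"
    using fin unfolding flag_stabilizer_def by simp
  ultimately show ?thesis
    using card_seteq by blast
qed

lemma mem_best_friend_if_scale_flag_eq:
  assumes fin: "finite (carrier R)" and K: "subfield K R" and flag: "is_flag K R Fl"
    and best: "is_best_friend K R Fl L"
    and x: "x \<in> carrier R" "x \<noteq> \<zero>" and g: "g \<in> carrier R"
    and eq: "scale_flag R Fl x = scale_flag R Fl (x \<otimes> g)"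
  shows "g \<in> L"
proof -
  have "u \<otimes> g \<in> U" if U: "U \<in> set Fl" "u \<in> U" for U u
  proof -
    have u: "u \<in> carrier R"
      using flag_elem_in_carrier [OF flag U] .
    have "(\<lambda>u. u \<otimes> x) ` U = (\<lambda>u. u \<otimes> (x \<otimes> g)) ` U"
      using eq U(1) unfolding scale_flag_def by (simp add: map_eq_conv)
    then have "u \<otimes> (x \<otimes> g) \<in> (\<lambda>u. u \<otimes> x) ` U"
      using U(2) by blast
    then obtain w where w: "w \<in> U" "u \<otimes> (x \<otimes> g) = w \<otimes> x"
      by blast
    have "u \<otimes> g \<otimes> x = w \<otimes> x"
      using u x g w(2) by (simp add: m_ac)
    then show ?thesis
      using m_rcancel [OF x(2) x(1) m_closed [OF u g] flag_elem_in_carrier [OF flag U(1) w(1)]] w(1)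
      by simp
  qed
  then have "g \<in> flag_stabilizer R Fl"
    using g by (blast intro: flag_stabilizerI)
  then show ?thesis
    using best_friend_eq_flag_stabilizer [OF fin K flag best] by simp
qed

end

section \<open>Powers in a finite field\<close>

context field
begin

lemma nat_pow_nonzero:
  assumes "b \<in> carrier R - {\<zero>}"
  shows "b [^] (k::nat) \<in> carrier R - {\<zero>}"
proof -
  interpret G: group "mult_of R"
    by (rule field_mult_group)
  show ?thesis
    using G.nat_pow_closed [of b k] assms by (simp add: nat_pow_mult_of)
qed

lemma pow_card_subfield_minus_one:
  assumes fin: "finite (carrier R)" and L: "subfield L R" and x: "x \<in> L" "x \<noteq> \<zero>"
  shows "x [^] (card L - 1) = \<one>"
proof -
  interpret L: field "R \<lparr>carrier := L\<rparr>"
    using subfield_iff(2) [OF L] .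
  interpret G: group "mult_of (R \<lparr>carrier := L\<rparr>)"
    by (rule L.field_mult_group)
  have "finite L"
    using fin subfieldE(3) [OF L] finite_subset by blast
  then have "order (mult_of (R \<lparr>carrier := L\<rparr>)) = card L - 1"
    using L.order_mult_of by (simp add: order_def)
  moreover have "x \<in> carrier (mult_of (R \<lparr>carrier := L\<rparr>))"
    using x by simp
  ultimately show ?thesis
    using G.pow_order_eq_1 by (simp add: nat_pow_mult_of nat_pow_def)
qed

lemma card_subfield_minus_one_dvd:
  assumes fin: "finite (carrier R)" and L: "subfield L R"
  shows "card L - 1 dvd card (carrier R) - 1"
proof -
  interpret G: group "mult_of R"
    by (rule field_mult_group)
  have "card (L - {\<zero>}) dvd order (mult_of R)"
    using G.lagrange [OF subgroup_mult_of [OF L]] by (metis dvd_triv_right)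
  moreover have "card (L - {\<zero>}) = card L - 1"
    using fin subfieldE(3) [OF L] subringE(2) [OF subfieldE(1) [OF L]] finite_subset by (metis card_Diff_singleton)
  ultimately show ?thesis
    by (simp add: order_def)
qed

lemma primitive_element_pow_eq_one_iff:
  assumes fin: "finite (carrier R)" and prim: "primitive_element R a"
  shows "a [^] (k::nat) = \<one> \<longleftrightarrow> card (carrier R) - 1 dvd k"
proof -
  interpret G: group "mult_of R"
    by (rule field_mult_group)
  have a: "a \<in> carrier (mult_of R)"
    using prim unfolding primitive_element_def by simp
  have "G.ord a \<noteq> 0"
    using G.ord_ge_1 [OF _ a] fin by simp
  then have "generate (mult_of R) {a} = {a [^] k | k. k \<in> (UNIV :: nat set)}"
    using G.generate_pow_nat [OF a] by (simp add: nat_pow_mult_of)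
  also have "\<dots> = carrier (mult_of R)"
    using prim nat_pow_nonzero unfolding primitive_element_def by auto
  finally have "G.ord a = card (carrier R) - 1"
    using G.generate_pow_card [OF a] fin by simp
  then show ?thesis
    using G.pow_eq_id [OF a] by (simp add: nat_pow_mult_of)
qed

lemma mult_order_pos_pow_eq_one:
  assumes fin: "finite (carrier R)" and b: "b \<in> carrier R - {\<zero>}"
  shows "0 < mult_order R b \<and> b [^] mult_order R b = \<one>"
proof -
  have "0 < card (carrier R) - 1"
    using one_lt_card_subfield [OF fin carrier_is_subfield] by simp
  moreover have "b [^] (card (carrier R) - 1) = \<one>"
    using pow_card_subfield_minus_one [OF fin carrier_is_subfield] b by blast
  ultimately show ?thesis
    unfolding mult_order_def by (rule LeastI [of _ "card (carrier R) - 1", OF conjI])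
qed

lemma pow_eq_if_cyc_eq:
  assumes "cyc R beta = cyc R a" and "a \<in> carrier R"
  obtains b :: nat where "a = beta [^] b"
proof -
  have "a \<in> cyc R beta"
    using assms unfolding cyc_def by (force intro: exI [of _ 1])
  then show ?thesis
    using that unfolding cyc_def by blast
qed

lemma lcm_div_dvd_if_pow_mem_subfield:
  fixes d l :: nat
  assumes fin: "finite (carrier R)" and alpha: "primitive_element R alpha" and L: "subfield L R"
    and beta: "beta \<in> carrier R - {\<zero>}" and l: "l dvd card (carrier R) - 1"
    and cyc: "cyc R beta = cyc R (alpha [^] l)" and mem: "beta [^] d \<in> L"
  shows "lcm l ((card (carrier R) - 1) div (card L - 1)) div l dvd d"
proof -
  define N M where "N = card (carrier R) - 1" and "M = card L - 1"
  have "0 < N" "0 < M"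
    using one_lt_card_subfield [OF fin carrier_is_subfield] one_lt_card_subfield [OF fin L]
    by (simp_all add: N_def M_def)
  have MN: "N = N div M * M"
    using card_subfield_minus_one_dvd [OF fin L] by (simp add: N_def M_def)
  have "0 < l"
    using l \<open>0 < N\<close> by (auto simp: N_def intro: gr0I)
  have alpha_carrier: "alpha \<in> carrier R" and beta_carrier: "beta \<in> carrier R"
    using alpha beta unfolding primitive_element_def by simp_all
  obtain b :: nat where gen: "alpha [^] l = beta [^] b"
    using pow_eq_if_cyc_eq [OF cyc] alpha_carrier by blast
  have "alpha [^] (l * (d * M)) = (alpha [^] l) [^] (d * M)"
    by (simp only: nat_pow_pow [OF alpha_carrier])
  also have "\<dots> = ((beta [^] d) [^] M) [^] b"
    by (simp only: gen nat_pow_pow [OF beta_carrier] ac_simps)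
  also have "\<dots> = \<one>"
    using pow_card_subfield_minus_one [OF fin L mem] nat_pow_nonzero [OF beta] by (simp add: M_def)
  finally have "N dvd l * d * M"
    using primitive_element_pow_eq_one_iff [OF fin alpha] by (simp add: N_def mult.assoc)
  then have "N div M dvd l * d"
    using MN \<open>0 < M\<close> by (metis dvd_times_right_cancel_iff not_gr0)
  then have "lcm l (N div M) dvd l * d"
    by (simp add: lcm_least)
  then have "lcm l (N div M) div l dvd d"
    using \<open>0 < l\<close> by (simp add: div_dvd_iff_mult mult.commute)
  then show ?thesis
    by (simp add: N_def M_def)
qed

end

section \<open>Subspace distance and orbit codes\<close>

context field
begin

lemma subspace_dist_same_dim:
  assumes fin: "finite (carrier R)" and K: "subfield K R"
    and q: "card K = q" and n: "card (carrier R) = q ^ n"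
    and A: "subalgebra K A R" and B: "subalgebra K B R"
    and dims: "sdim K R A = s" "sdim K R B = s"
  shows "subspace_dist K R A B = 2 * (s - sdim K R (A \<inter> B))"
    and "2 * s - n \<le> sdim K R (A \<inter> B)"
    and "sdim K R (A \<inter> B) \<le> s"
proof -
  note sum = sum_space_dim [OF K finite_dimension_subalgebra [OF K fin A] finite_dimension_subalgebra [OF K fin B]]
  have AB: "subalgebra K (A \<inter> B) R"
    using subalgebra_inter [OF A B] .
  have "dim K (A <+>\<^bsub>R\<^esub> B) \<le> dim K (carrier R)"
    using finite_dimension_imp_subalgebra [OF K sum(1)] carrier_is_subalgebra [OF subfieldE(3) [OF K]]
    by (intro dim_subalgebra_mono [OF fin K]) (simp_all add: subalgebra_in_carrier)
  moreover have "dim K (A \<inter> B) \<le> dim K A"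
    using dim_subalgebra_mono [OF fin K AB A] by simp
  moreover have "dim K (A <+>\<^bsub>R\<^esub> B) = s + s - dim K (A \<inter> B)"
    using sum(2) dims by (simp add: over_def sdim_def)
  ultimately show "subspace_dist K R A B = 2 * (s - sdim K R (A \<inter> B))"
    and "2 * s - n \<le> sdim K R (A \<inter> B)" and "sdim K R (A \<inter> B) \<le> s"
    using dims dim_carrier [OF fin K q n] by (simp_all add: subspace_dist_def sdim_def)
qed

lemma subspace_dist_le:
  assumes "finite (carrier R)" and "subfield K R"
    and "card K = q" and "card (carrier R) = q ^ n"
    and "subalgebra K A R" and "subalgebra K B R"
    and "sdim K R A = s" and "sdim K R B = s"
  shows "subspace_dist K R A B \<le> 2 * min s (n - s)"
  using subspace_dist_same_dim [OF assms] by simp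

text \<open>On naturals, \<open>2 * s - n\<close> is \<open>max 0 (2s - n)\<close>: both cases of the theorem at once.\<close>

lemma card_inter_if_subspace_dist_max:
  assumes fin: "finite (carrier R)" and K: "subfield K R"
    and q: "card K = q" and n: "card (carrier R) = q ^ n"
    and A: "subalgebra K A R" and B: "subalgebra K B R"
    and dims: "sdim K R A = s" "sdim K R B = s"
    and max: "subspace_dist K R A B = 2 * min s (n - s)"
  shows "card (A \<inter> B) = q ^ (2 * s - n)"
proof -
  have "sdim K R (A \<inter> B) = 2 * s - n"
    using subspace_dist_same_dim [OF fin K q n A B dims] max by simp
  then show ?thesis
    using card_subalgebra [OF K fin subalgebra_inter [OF A B]] q by (simp add: sdim_def)
qed

lemma flag_component:
  assumes fin: "finite (carrier R)" and K: "subfield K R" and q: "card K = q"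
    and flag: "is_flag K R Fl" and i: "i < length Fl"
  shows "subalgebra K (Fl ! i) R" and "card (Fl ! i) = q ^ (flag_type K R Fl ! i)"
    and "{\<zero>} \<subset> Fl ! i" and "Fl ! i \<subset> carrier R"
proof -
  show sub: "subalgebra K (Fl ! i) R"
    using flag_subalgebra [OF flag nth_mem [OF i]] .
  show "card (Fl ! i) = q ^ (flag_type K R Fl ! i)"
    using card_subalgebra [OF K fin sub] q i by (simp add: flag_type_def sdim_def)
  show "{\<zero>} \<subset> Fl ! i" "Fl ! i \<subset> carrier R"
    using flag i unfolding is_flag_def by auto
qed

lemma flag_type_bounds:
  assumes fin: "finite (carrier R)" and K: "subfield K R"
    and q: "card K = q" and n: "card (carrier R) = q ^ n"
    and flag: "is_flag K R Fl" and t: "t \<in> set (flag_type K R Fl)"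
  shows "0 < t" and "t < n"
proof -
  obtain i where i: "i < length Fl" "flag_type K R Fl ! i = t"
    using t by (auto simp: flag_type_def in_set_conv_nth)
  note U = flag_component [OF fin K q flag i(1)]
  have "card {\<zero>} < card (Fl ! i)" "card (Fl ! i) < card (carrier R)"
    using U(3,4) fin finite_subset psubset_card_mono by (metis psubsetE)+
  then have "q ^ 0 < q ^ t" "q ^ t < q ^ n"
    using U(2) i(2) n by simp_all
  moreover have "1 < q"
    using one_lt_card_subfield [OF fin K] q by simp
  ultimately show "0 < t" "t < n"
    using power_strict_increasing_iff by blast+
qed

lemma best_friend_degree_dvd_flag_type:
  assumes fin: "finite (carrier R)" and K: "subfield K R" and q: "card K = q"
    and flag: "is_flag K R Fl" and best: "is_best_friend K R Fl L" and m: "card L = q ^ m"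
    and t: "t \<in> set (flag_type K R Fl)"
  shows "m dvd t"
proof -
  obtain i where i: "i < length Fl" "flag_type K R Fl ! i = t"
    using t by (auto simp: flag_type_def in_set_conv_nth)
  have L: "subfield L R" "K \<subseteq> L" "subalgebra L (Fl ! i) R"
    using best nth_mem [OF i(1)] unfolding is_best_friend_def is_friend_def by auto
  have "q ^ dim K L = q ^ m"
    using card_subalgebra [OF K fin subfield_subalgebra [OF L(1,2)]] q m by simp
  then have "dim K L = m"
    using one_lt_card_subfield [OF fin K] q by (simp add: power_inject_exp)
  moreover have "dim K (Fl ! i) = t"
    using i by (simp add: flag_type_def sdim_def)
  ultimately show ?thesis
    using dim_subfield_dvd_dim [OF fin K L] by simp
qed

text \<open>The optimum distance is the sum of the componentwise maxima, so every component attains its maximum.\<close>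

lemma optimum_distance_card_inter:
  assumes fin: "finite (carrier R)" and K: "subfield K R"
    and q: "card K = q" and n: "card (carrier R) = q ^ n"
    and opt: "optimum_distance K R n ts C" and C: "finite C"
    and F: "F1 \<in> C" "F2 \<in> C" "F1 \<noteq> F2" and i: "i < length ts"
  shows "card (F1 ! i \<inter> F2 ! i) = q ^ (2 * ts ! i - n)"
proof -
  have flags: "is_flag K R F" "flag_type K R F = ts" if "F \<in> C" for F
    using opt that unfolding optimum_distance_def by auto
  have comp: "subalgebra K (F ! j) R" "sdim K R (F ! j) = ts ! j" if "F \<in> C" "j < length ts" for F j
    using flag_subalgebra [OF flags(1) [OF that(1)]] flags(2) [OF that(1)] that(2)
    by (auto simp: flag_type_def)
  define e where "e j = 2 * min (ts ! j) (n - ts ! j)" for j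
  define dist where "dist j = subspace_dist K R (F1 ! j) (F2 ! j)" for j
  have dist_le: "dist j \<le> e j" if "j < length ts" for j
    unfolding dist_def e_def
    using subspace_dist_le [OF fin K q n comp(1) [OF F(1) that] comp(1) [OF F(2) that]
        comp(2) [OF F(1) that] comp(2) [OF F(2) that]] by simp
  have "(\<Sum>j<length ts. e j) = min_dist K R C"
    using opt unfolding optimum_distance_def e_def
    by (auto simp: sum_distrib_left min_def intro!: sum.cong simp flip: sum.distrib)
  also have "\<dots> \<le> flag_dist K R F1 F2"
  proof -
    let ?D = "{flag_dist K R F1 F2 | F1 F2. F1 \<in> C \<and> F2 \<in> C \<and> F1 \<noteq> F2}"
    have "?D \<subseteq> (\<lambda>(F1, F2). flag_dist K R F1 F2) ` (C \<times> C)"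
      by auto
    then have "finite ?D"
      by (rule finite_subset) (use C in simp)
    moreover have "\<not> card C \<le> 1"
      using F C card_mono [of C "{F1, F2}"] by simp
    ultimately show ?thesis
      using F unfolding min_dist_def by (auto intro: Min_le)
  qed
  also have "\<dots> = (\<Sum>j<length ts. dist j)"
    using flags(2) [OF F(1)] unfolding flag_dist_def dist_def flag_type_def by auto
  finally have "(\<Sum>j<length ts. e j) \<le> (\<Sum>j<length ts. dist j)" .
  then have "dist i = e i"
    using dist_le i sum_strict_mono_ex1 [of "{..<length ts}" dist e] by (metis finite_lessThan le_neq_implies_less lessThan_iff not_le)
  then show ?thesis
    using card_inter_if_subspace_dist_max [OF fin K q n comp(1) [OF F(1) i] comp(1) [OF F(2) i]
        comp(2) [OF F(1) i] comp(2) [OF F(2) i]] by (simp add: dist_def e_def)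
qed

lemma scale_flag_pow_mem_orbit_flag:
  fixes c j :: nat
  assumes fin: "finite (carrier R)" and L: "subfield L R" and beta: "beta \<in> carrier R - {\<zero>}"
    and c_dvd: "\<And>d::nat. beta [^] d \<in> L \<Longrightarrow> c dvd d" and j: "j < c"
  shows "scale_flag R Fl (beta [^] j) \<in> orbit_flag R Fl beta"
proof -
  have "c dvd mult_order R beta"
    using c_dvd mult_order_pos_pow_eq_one [OF fin beta] subringE(3) [OF subfieldE(1) [OF L]] by simp
  then have "j < mult_order R beta"
    using j mult_order_pos_pow_eq_one [OF fin beta] by (meson dvd_imp_le order_less_le_trans)
  then show ?thesis
    unfolding orbit_flag_def by blast
qed

lemma scale_flag_pow_inj:
  fixes c j k :: nat
  assumes fin: "finite (carrier R)" and K: "subfield K R" and flag: "is_flag K R Fl"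
    and best: "is_best_friend K R Fl L" and beta: "beta \<in> carrier R - {\<zero>}"
    and c_dvd: "\<And>d::nat. beta [^] d \<in> L \<Longrightarrow> c dvd d" and jk: "j < c" "k < c"
    and eq: "scale_flag R Fl (beta [^] j) = scale_flag R Fl (beta [^] k)"
  shows "j = k"
proof -
  have no_collision: "scale_flag R Fl (beta [^] i1) \<noteq> scale_flag R Fl (beta [^] i2)"
    if "i1 < i2" "i2 < c" for i1 i2 :: nat
  proof
    assume eq': "scale_flag R Fl (beta [^] i1) = scale_flag R Fl (beta [^] i2)"
    have "beta [^] (i2 - i1) \<in> L"
    proof (rule mem_best_friend_if_scale_flag_eq [OF fin K flag best])
      show "beta [^] i1 \<in> carrier R" "beta [^] i1 \<noteq> \<zero>" "beta [^] (i2 - i1) \<in> carrier R"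
        using nat_pow_nonzero [OF beta] by blast+
      show "scale_flag R Fl (beta [^] i1) = scale_flag R Fl (beta [^] i1 \<otimes> beta [^] (i2 - i1))"
        using eq' that(1) beta by (simp add: nat_pow_mult)
    qed
    then have "c dvd i2 - i1"
      by (rule c_dvd)
    with that show False
      by (simp add: nat_dvd_not_less)
  qed
  show ?thesis
    using no_collision [of j k] no_collision [of k j] eq jk by (cases j k rule: linorder_cases) auto
qed

lemma optimum_orbit_components:
  fixes c :: nat
  assumes fin: "finite (carrier R)" and K: "subfield K R"
    and q: "card K = q" and n: "card (carrier R) = q ^ n"
    and flag: "is_flag K R Fl" and best: "is_best_friend K R Fl L" and beta: "beta \<in> carrier R - {\<zero>}"
    and opt: "optimum_distance K R n (flag_type K R Fl) (orbit_flag R Fl beta)"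
    and c_dvd: "\<And>d::nat. beta [^] d \<in> L \<Longrightarrow> c dvd d" and i: "i < length Fl"
  shows "\<And>j. j < c \<Longrightarrow> \<zero> \<in> scale_flag R Fl (beta [^] j) ! i
      \<and> scale_flag R Fl (beta [^] j) ! i \<subseteq> carrier R
      \<and> card (scale_flag R Fl (beta [^] j) ! i) = q ^ (flag_type K R Fl ! i)"
    and "\<And>j k. j < c \<Longrightarrow> k < c \<Longrightarrow> j \<noteq> k \<Longrightarrow>
      card (scale_flag R Fl (beta [^] j) ! i \<inter> scale_flag R Fl (beta [^] k) ! i)
        = q ^ (2 * flag_type K R Fl ! i - n)"
proof -
  have L: "subfield L R"
    using best unfolding is_best_friend_def is_friend_def by simp
  have member: "scale_flag R Fl (beta [^] j) \<in> orbit_flag R Fl beta" if "j < c" for j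
    using fin L beta c_dvd that by (rule scale_flag_pow_mem_orbit_flag)
  have scaled: "is_flag K R (scale_flag R Fl (beta [^] j))"
    "flag_type K R (scale_flag R Fl (beta [^] j)) = flag_type K R Fl" if "j < c" for j
    using opt member [OF that] unfolding optimum_distance_def by auto
  have len: "i < length (scale_flag R Fl (beta [^] j))" for j
    using i by (simp add: scale_flag_def)
  show "\<zero> \<in> scale_flag R Fl (beta [^] j) ! i
      \<and> scale_flag R Fl (beta [^] j) ! i \<subseteq> carrier R
      \<and> card (scale_flag R Fl (beta [^] j) ! i) = q ^ (flag_type K R Fl ! i)" if "j < c" for j
    using flag_component [OF fin K q scaled(1) [OF that] len] scaled(2) [OF that] by auto
  show "card (scale_flag R Fl (beta [^] j) ! i \<inter> scale_flag R Fl (beta [^] k) ! i)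
      = q ^ (2 * flag_type K R Fl ! i - n)" if "j < c" "k < c" "j \<noteq> k" for j k
  proof (rule optimum_distance_card_inter [OF fin K q n opt])
    show "finite (orbit_flag R Fl beta)"
      by (simp add: orbit_flag_def)
    show "scale_flag R Fl (beta [^] j) \<noteq> scale_flag R Fl (beta [^] k)"
    proof
      assume "scale_flag R Fl (beta [^] j) = scale_flag R Fl (beta [^] k)"
      with fin K flag best beta c_dvd that(1,2) have "j = k"
        by (rule scale_flag_pow_inj)
      with that(3) show False ..
    qed
  qed (use member that i in \<open>simp_all add: flag_type_def\<close>)
qed

end

theorem theorem4p21:
  fixes R :: "('a, 'b) ring_scheme" and K L :: "'a set"
    and q n m l t :: nat and alpha beta :: 'a and Fl :: "'a set list"
  assumes "field R" and "finite (carrier R)"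
    and "\<exists>p k. prime (p::nat) \<and> k > 0 \<and> q = p ^ k"
    and "subfield K R" and "card K = q" and "card (carrier R) = q ^ n"
    and "primitive_element R alpha"
    and "is_flag K R Fl"
    and "is_best_friend K R Fl L" and "card L = q ^ m"
    and "beta \<in> carrier R - {\<zero>\<^bsub>R\<^esub>}"
    and "l dvd q ^ n - 1" and "cyc R beta = cyc R (alpha [^]\<^bsub>R\<^esub> l)"
    and "optimum_distance K R n (flag_type K R Fl) (orbit_flag R Fl beta)"
    and "t \<in> set (flag_type K R Fl)"
  shows "m dvd t \<and>
    lcm l ((q ^ n - 1) div (q ^ m - 1)) div l \<le>
      (if 2 * t \<le> n then (q ^ n - 1) div (q ^ t - 1) else (q ^ n - 1) div (q ^ (n - t) - 1))"
proof -
  interpret field R by fact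
  note fin = assms(2) and K = assms(4) and q = assms(5) and n = assms(6)
    and flag = assms(8) and best = assms(9) and beta = assms(11)
  have L: "subfield L R"
    using best unfolding is_best_friend_def is_friend_def by simp
  define c where "c = lcm l ((q ^ n - 1) div (q ^ m - 1)) div l"
  have c_dvd: "c dvd d" if "beta [^]\<^bsub>R\<^esub> d \<in> L" for d :: nat
    using lcm_div_dvd_if_pow_mem_subfield [OF fin assms(7) L beta _ assms(13) that] assms(10,12) n
    by (simp add: c_def)
  obtain i where i: "i < length Fl" "flag_type K R Fl ! i = t"
    using assms(15) by (auto simp: flag_type_def in_set_conv_nth)
  note orbit = optimum_orbit_components [OF fin K q n flag best beta assms(14) c_dvd i(1), unfolded i(2)]
  have "c \<le> (if 2 * t \<le> n then (q ^ n - 1) div (q ^ t - 1) else (q ^ n - 1) div (q ^ (n - t) - 1))"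
    using card_family_through_point_le [OF fin n zero_closed _ flag_type_bounds [OF fin K q n flag assms(15)]
        orbit(1)] orbit(2) one_lt_card_subfield [OF fin K] q by simp
  then show ?thesis
    using best_friend_degree_dvd_flag_type [OF fin K q flag best assms(10,15)] by (simp add: c_def)
qed

end
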